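(* A finite relational structure $\mathcal H$ is strongly $2$-rectangular if and only if it is strongly $2$-balanced.
   Context: For a prime $p$, a relation is $p$-mpp-definable in $\mathcal H$ if it is defined by a formula of the form $\exists^{\equiv p}\mathbf y_1\exists^{\equiv p}\mathbf y_2\cdots\exists^{\equiv p}\mathbf y_s\,\Phi$, where $\Phi$ is a conjunction of atomic formulas using relations of $\mathcal H$ and equality, the $\mathbf y_j$ are (groups of) variables, and $\exists^{\equiv p}\mathbf y\,\Psi(\mathbf x,\mathbf y)$ holds for $\mathbf a$ iff the number of $\mathbf b$ with $\Psi(\mathbf a,\mathbf b)$ true is not divisible by $p$. $\langle\mathcal H\rangle_p$ is the set of all relations $p$-mpp-definable in $\mathcal H$. A binary relation $\mathcal R\subseteq A_1\times A_2$ is rectangular if $(a,c),(a,d),(b,c)\in\mathcal R$ implies $(b,d)\in\mathcal R$. An $n$-ary relation $\mathcal R$ ($n\ge2$) is rectangular if for every nonempty $I\subsetneq[n]$, $\mathcal R$ viewed as a binary relation between $\mathrm{pr}_I\mathcal R$ and $\mathrm{pr}_{[n]\setminus I}\mathcal R$ is rectangular. $\mathcal H$ is strongly $p$-rectangular if every relation in $\langle\mathcal H\rangle_p$ of arity at least 2 is rectangular. A matrix is a rank-1 block matrix if after permuting rows and columns it is block-diagonal (blocks not necessarily square) with every nonzero block of rank at most 1. A ternary relation $\mathcal R\subseteq A_1\times A_2\times A_3$ is $p$-balanced if the matrix $M_{\mathcal R}\in\mathbb Z_p^{A_1\times A_2}$, $M_{\mathcal R}[x,y]=|\{z:(x,y,z)\in\mathcal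 R\}|\bmod p$, is a rank-1 block matrix over $\mathbb Z_p$; a relation of higher arity $n$ is $p$-balanced if every representation of it as a ternary relation $\subseteq H^k\times H^\ell\times H^{n-k-\ell}$ (grouping coordinates) is $p$-balanced. $\mathcal H$ is strongly $p$-balanced if every relation in $\langle\mathcal H\rangle_p$ is $p$-balanced. *)

theory Defs
  imports Main
begin

text \<open>A relational structure is given by its universe U and a set Rels of relations;
  each relation is a pair (n, R) of its arity n and a set R of tuples (lists of length n).\<close>

datatype 'a atom =
    RelAtom nat "'a list set" "nat list"
  | EqAtom nat nat

fun atom_holds :: "'a atom \<Rightarrow> (nat \<Rightarrow> 'a) \<Rightarrow> bool" where
  "atom_holds (RelAtom n R vs) \<sigma> = (map \<sigma> vs \<in> R)"
| "atom_holds (EqAtom v w) \<sigma> = (\<sigma> v = \<sigma> w)"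

fun atom_vars :: "'a atom \<Rightarrow> nat set" where
  "atom_vars (RelAtom n R vs) = set vs"
| "atom_vars (EqAtom v w) = {v, w}"

fun atom_wf :: "(nat \<times> 'a list set) set \<Rightarrow> 'a atom \<Rightarrow> bool" where
  "atom_wf Rels (RelAtom n R vs) = ((n, R) \<in> Rels \<and> length vs = n)"
| "atom_wf Rels (EqAtom v w) = True"

text \<open>Semantics of the formula  Ex^{=p} Y1 Ex^{=p} Y2 ... Ex^{=p} Ys. Phi  under an assignment;
  the quantifier prefix is a list of variable groups, outermost first; Phi is a list of atoms
  (their conjunction).  Ex^{=p} Y. Psi holds iff the number of assignments of the variables of Y
  to elements of U making Psi true is not divisible by p.\<close>

fun mpp_holds :: "nat \<Rightarrow> 'a set \<Rightarrow> nat set list \<Rightarrow> 'a atom list \<Rightarrow> (nat \<Rightarrow> 'a) \<Rightarrow> bool" where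
  "mpp_holds p U [] \<Phi> \<sigma> = (\<forall>at\<in>set \<Phi>. atom_holds at \<sigma>)"
| "mpp_holds p U (Y # Ys) \<Phi> \<sigma> =
     (\<not> p dvd card {\<rho>. (\<forall>v\<in>Y. \<rho> v \<in> U) \<and> (\<forall>v. v \<notin> Y \<longrightarrow> \<rho> v = \<sigma> v) \<and> mpp_holds p U Ys \<Phi> \<rho>})"

definition assign :: "nat list \<Rightarrow> 'a list \<Rightarrow> nat \<Rightarrow> 'a" where
  "assign xs a v = (case map_of (zip xs a) v of Some b \<Rightarrow> b | None \<Rightarrow> undefined)"

definition mpp_wf :: "(nat \<times> 'a list set) set \<Rightarrow> nat list \<Rightarrow> nat set list \<Rightarrow> 'a atom list \<Rightarrow> bool" where
  "mpp_wf Rels xs Ys \<Phi> \<longleftrightarrow>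
     distinct xs \<and> (\<forall>Y\<in>set Ys. finite Y) \<and> set xs \<inter> \<Union>(set Ys) = {} \<and>
     (\<forall>at\<in>set \<Phi>. atom_wf Rels at \<and> atom_vars at \<subseteq> set xs \<union> \<Union>(set Ys))"

definition mpp_rel :: "nat \<Rightarrow> 'a set \<Rightarrow> nat list \<Rightarrow> nat set list \<Rightarrow> 'a atom list \<Rightarrow> 'a list set" where
  "mpp_rel p U xs Ys \<Phi> =
     {a. length a = length xs \<and> set a \<subseteq> U \<and> mpp_holds p U Ys \<Phi> (assign xs a)}"

definition mpp_definable :: "nat \<Rightarrow> 'a set \<Rightarrow> (nat \<times> 'a list set) set \<Rightarrow> nat \<Rightarrow> 'a list set \<Rightarrow> bool" where
  "mpp_definable p U Rels n R \<longleftrightarrow>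
     (\<exists>xs Ys \<Phi>. mpp_wf Rels xs Ys \<Phi> \<and> length xs = n \<and> R = mpp_rel p U xs Ys \<Phi>)"

definition rectangular_bin :: "('b \<times> 'c) set \<Rightarrow> bool" where
  "rectangular_bin B \<longleftrightarrow>
     (\<forall>a b c d. (a, c) \<in> B \<longrightarrow> (a, d) \<in> B \<longrightarrow> (b, c) \<in> B \<longrightarrow> (b, d) \<in> B)"

definition rectangular :: "nat \<Rightarrow> 'a list set \<Rightarrow> bool" where
  "rectangular n R \<longleftrightarrow>
     (\<forall>I. I \<noteq> {} \<longrightarrow> I \<subset> {..<n} \<longrightarrow>
        rectangular_bin {(nths t I, nths t ({..<n} - I)) | t. t \<in> R})"

definition strongly_rectangular :: "nat \<Rightarrow> 'a set \<Rightarrow> (nat \<times> 'a list set) set \<Rightarrow> bool" where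
  "strongly_rectangular p U Rels \<longleftrightarrow>
     (\<forall>n R. mpp_definable p U Rels n R \<longrightarrow> 2 \<le> n \<longrightarrow> rectangular n R)"

text \<open>A matrix over Z_p (entries taken mod p) with rows Rows and columns Cols is a rank-1 block
  matrix: there is a block labelling f of rows and g of columns such that all entries outside the
  diagonal blocks vanish mod p, and every diagonal block is (mod p) an outer product u v^T,
  i.e. has rank at most 1 over Z_p.\<close>
definition rank1_block :: "nat \<Rightarrow> 'r set \<Rightarrow> 'c set \<Rightarrow> ('r \<Rightarrow> 'c \<Rightarrow> int) \<Rightarrow> bool" where
  "rank1_block p Rows Cols M \<longleftrightarrow>
     (\<exists>(f :: 'r \<Rightarrow> nat) (g :: 'c \<Rightarrow> nat).
        (\<forall>x\<in>Rows. \<forall>y\<in>Cols. M x y mod int p \<noteq> 0 \<longrightarrow> f x = g y) \<and>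
        (\<forall>i. \<exists>(u :: 'r \<Rightarrow> int) (v :: 'c \<Rightarrow> int). \<forall>x\<in>Rows. \<forall>y\<in>Cols.
            f x = i \<longrightarrow> g y = i \<longrightarrow> M x y mod int p = (u x * v y) mod int p))"

definition tuples :: "'a set \<Rightarrow> nat \<Rightarrow> 'a list set" where
  "tuples U k = {t. length t = k \<and> set t \<subseteq> U}"

text \<open>n-ary relation viewed as ternary relation in U^k x U^l x U^(n-k-l) (all parts nonempty).\<close>
definition p_balanced :: "nat \<Rightarrow> 'a set \<Rightarrow> nat \<Rightarrow> 'a list set \<Rightarrow> bool" where
  "p_balanced p U n R \<longleftrightarrow>
     (\<forall>k l. 1 \<le> k \<longrightarrow> 1 \<le> l \<longrightarrow> k + l < n \<longrightarrow>
        rank1_block p (tuples U k) (tuples U l)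
          (\<lambda>x y. int (card {z \<in> tuples U (n - k - l). x @ y @ z \<in> R}) mod int p))"

definition strongly_balanced :: "nat \<Rightarrow> 'a set \<Rightarrow> (nat \<times> 'a list set) set \<Rightarrow> bool" where
  "strongly_balanced p U Rels \<longleftrightarrow>
     (\<forall>n R. mpp_definable p U Rels n R \<longrightarrow> p_balanced p U n R)"

end

theory Submission
  imports Defs "HOL-Computational_Algebra.Primes"
begin

(* Modulo 2 a count is nonzero exactly when it is odd, so the matrix of a ternary relation is
  0/1 valued mod 2, and a 0/1 matrix is a rank-1 block matrix iff its support is rectangular.
  If H is strongly 2-rectangular, the support of M_R is the relation "an odd number of z
  satisfy R(x,y,z)", which is 2-mpp-definable (quantify the z-variables) and hence rectangular.
  Conversely, to test R against a split of its coordinates, regroup the coordinates accordingly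
  and append a copy of one of them: the matrix of the resulting definable relation is the 0/1
  indicator of R as a binary relation, and the support of a rank-1 block matrix over a field
  is rectangular. *)

lemma map_of_zip_eq_None: "v \<notin> set xs \<Longrightarrow> map_of (zip xs a) v = None"
  by (auto simp: map_of_eq_None_iff dest: set_zip_leftD)

lemma assign_notin: "v \<notin> set xs \<Longrightarrow> assign xs a v = undefined"
  by (simp add: assign_def map_of_zip_eq_None)

lemma assign_append:
  assumes "length xs = length a"
  shows "assign (xs @ ys) (a @ b) v = (if v \<in> set xs then assign xs a v else assign ys b v)"
proof (cases "v \<in> set xs")
  case True
  then obtain c where "map_of (zip xs a) v = Some c"
    using assms by (metis domD dom_map_of_zip)
  then show ?thesis using True assms by (simp add: assign_def)
next
  case False
  then show ?thesis using assms by (simp add: assign_def map_add_def map_of_zip_eq_None)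
qed

lemma assign_append_disjoint:
  "length xs = length a \<Longrightarrow> set xs \<inter> set ys = {} \<Longrightarrow>
   assign (xs @ ys) (a @ b) = override_on (assign xs a) (assign ys b) (set ys)"
  by (rule ext) (auto simp: assign_append override_on_def assign_notin)

lemma map_assign: "distinct xs \<Longrightarrow> length a = length xs \<Longrightarrow> map (assign xs a) xs = a"
  by (rule nth_equalityI) (auto simp: assign_def map_of_zip_nth)

lemma assign_map: "distinct xs \<Longrightarrow> v \<in> set xs \<Longrightarrow> assign xs (map f xs) v = f v"
  by (metis in_set_conv_nth length_map map_assign nth_map)

lemma assign_in_set:
  "distinct xs \<Longrightarrow> length a = length xs \<Longrightarrow> v \<in> set xs \<Longrightarrow> assign xs a v \<in> set a"
  by (metis image_eqI list.set_map map_assign)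

section \<open>Semantics of mpp-formulas\<close>

lemma card_assignments_eq_card_tuples:
  assumes "distinct ys"
  shows "card {\<rho>. (\<forall>v\<in>set ys. \<rho> v \<in> U) \<and> (\<forall>v. v \<notin> set ys \<longrightarrow> \<rho> v = \<sigma> v) \<and> P \<rho>} =
         card {z \<in> tuples U (length ys). P (override_on \<sigma> (assign ys z) (set ys))}"
proof -
  let ?A = "{\<rho>. (\<forall>v\<in>set ys. \<rho> v \<in> U) \<and> (\<forall>v. v \<notin> set ys \<longrightarrow> \<rho> v = \<sigma> v) \<and> P \<rho>}"
  let ?ext = "\<lambda>z. override_on \<sigma> (assign ys z) (set ys)"
  let ?Z = "{z \<in> tuples U (length ys). P (?ext z)}"
  have "bij_betw ?ext ?Z ?A"
  proof (rule bij_betw_byWitness[where f' = "\<lambda>\<rho>. map \<rho> ys"])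
    show "\<forall>z\<in>?Z. map (?ext z) ys = z"
      using assms by (auto simp: tuples_def map_assign cong: map_cong)
    show inv: "\<forall>\<rho>\<in>?A. ?ext (map \<rho> ys) = \<rho>"
      using assms by (auto simp: override_on_def assign_map)
    show "?ext ` ?Z \<subseteq> ?A"
      using assms assign_in_set by (fastforce simp: tuples_def)
    show "(\<lambda>\<rho>. map \<rho> ys) ` ?A \<subseteq> ?Z"
      using inv by (auto simp: tuples_def)
  qed
  then show ?thesis by (simp add: bij_betw_same_card)
qed

lemma mpp_holds_Cons_tuples:
  "distinct ys \<Longrightarrow> mpp_holds p U (set ys # Ys) \<Phi> \<sigma> \<longleftrightarrow>
     \<not> p dvd card {z \<in> tuples U (length ys). mpp_holds p U Ys \<Phi> (override_on \<sigma> (assign ys z) (set ys))}"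
  by (simp add: card_assignments_eq_card_tuples)

lemma atom_holds_cong:
  "(\<And>v. v \<in> atom_vars at \<Longrightarrow> \<sigma> v = \<sigma>' v) \<Longrightarrow> atom_holds at \<sigma> = atom_holds at \<sigma>'"
  by (cases at) (auto cong: map_cong)

lemma mpp_holds_cong:
  assumes "\<forall>Y\<in>set Ys. finite Y"
    and "\<And>v. v \<in> (\<Union>at\<in>set \<Phi>. atom_vars at) - \<Union>(set Ys) \<Longrightarrow> \<sigma> v = \<sigma>' v"
  shows "mpp_holds p U Ys \<Phi> \<sigma> = mpp_holds p U Ys \<Phi> \<sigma>'"
  using assms
proof (induction Ys arbitrary: \<sigma> \<sigma>')
  case Nil
  have "atom_holds at \<sigma> = atom_holds at \<sigma>'" if "at \<in> set \<Phi>" for at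
    by (rule atom_holds_cong) (use Nil.prems(2) that in auto)
  then show ?case by simp
next
  case (Cons Y Ys)
  obtain ys where ys: "set ys = Y" "distinct ys"
    using Cons.prems(1) finite_distinct_list by auto
  have "mpp_holds p U Ys \<Phi> (override_on \<sigma> g Y) = mpp_holds p U Ys \<Phi> (override_on \<sigma>' g Y)" for g
    by (rule Cons.IH) (use Cons.prems in \<open>auto simp: override_on_def\<close>)
  then show ?case
    unfolding ys(1)[symmetric] mpp_holds_Cons_tuples[OF ys(2)] by simp
qed

lemma mpp_holds_atom:
  "atom_vars at \<inter> \<Union>(set Ys) = {} \<Longrightarrow>
   mpp_holds p U Ys (at # \<Phi>) \<sigma> = (atom_holds at \<sigma> \<and> mpp_holds p U Ys \<Phi> \<sigma>)"
proof (induction Ys arbitrary: \<sigma>)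
  case Nil
  then show ?case by simp
next
  case (Cons Y Ys)
  have "atom_holds at \<rho> = atom_holds at \<sigma>" if "\<forall>v. v \<notin> Y \<longrightarrow> \<rho> v = \<sigma> v" for \<rho>
    by (rule atom_holds_cong) (use that Cons.prems in auto)
  moreover have "mpp_holds p U Ys (at # \<Phi>) \<rho> = (atom_holds at \<rho> \<and> mpp_holds p U Ys \<Phi> \<rho>)" for \<rho>
    using Cons by auto
  ultimately show ?case by (cases "atom_holds at \<sigma>") (simp_all cong: conj_cong)
qed

lemma mpp_holds_cong_free:
  "mpp_wf Rels xs Ys \<Phi> \<Longrightarrow> \<forall>v\<in>set xs. \<sigma> v = \<sigma>' v \<Longrightarrow>
   mpp_holds p U Ys \<Phi> \<sigma> = mpp_holds p U Ys \<Phi> \<sigma>'"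
  unfolding mpp_wf_def by (rule mpp_holds_cong) blast+

lemma map_assign_mem_mpp_rel:
  assumes wf: "mpp_wf Rels xs Ys \<Phi>" and xs': "distinct xs'" "set xs' = set xs"
    and t: "t \<in> mpp_rel p U xs Ys \<Phi>"
  shows "map (assign xs t) xs' \<in> mpp_rel p U xs' Ys \<Phi>"
proof -
  have dist: "distinct xs" and len: "length t = length xs" and tU: "set t \<subseteq> U"
    using wf t by (auto simp: mpp_wf_def mpp_rel_def)
  have "assign xs' (map (assign xs t) xs') v = assign xs t v" if "v \<in> set xs" for v
    using xs' that by (simp add: assign_map)
  then have "mpp_holds p U Ys \<Phi> (assign xs' (map (assign xs t) xs'))"
    using t mpp_holds_cong_free[OF wf, of "assign xs' _" "assign xs t"] by (simp add: mpp_rel_def)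
  moreover have "set (map (assign xs t) xs') \<subseteq> U"
    using assign_in_set[OF dist len] xs'(2) tU by auto
  ultimately show ?thesis using xs' dist len by (simp add: mpp_rel_def distinct_card[symmetric])
qed

lemma mpp_rel_rename:
  assumes wf: "mpp_wf Rels xs Ys \<Phi>" and xs': "distinct xs'" "set xs' = set xs"
  shows "mpp_rel p U xs' Ys \<Phi> = (\<lambda>t. map (assign xs t) xs') ` mpp_rel p U xs Ys \<Phi>"
proof
  show "(\<lambda>t. map (assign xs t) xs') ` mpp_rel p U xs Ys \<Phi> \<subseteq> mpp_rel p U xs' Ys \<Phi>"
    using map_assign_mem_mpp_rel[OF wf xs'] by blast
  show "mpp_rel p U xs' Ys \<Phi> \<subseteq> (\<lambda>t. map (assign xs t) xs') ` mpp_rel p U xs Ys \<Phi>"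
  proof
    fix a assume a: "a \<in> mpp_rel p U xs' Ys \<Phi>"
    have wf': "mpp_wf Rels xs' Ys \<Phi>" and dist: "distinct xs"
      using wf xs' by (auto simp: mpp_wf_def)
    let ?t = "map (assign xs' a) xs"
    have "?t \<in> mpp_rel p U xs Ys \<Phi>"
      using map_assign_mem_mpp_rel[OF wf' dist xs'(2)[symmetric] a] .
    moreover have "map (assign xs ?t) xs' = a"
    proof -
      have "map (assign xs ?t) xs' = map (assign xs' a) xs'"
        using dist xs'(2) by (auto simp: assign_map)
      also have "\<dots> = a"
        using a xs'(1) by (simp add: map_assign mpp_rel_def)
      finally show ?thesis .
    qed
    ultimately show "a \<in> (\<lambda>t. map (assign xs t) xs') ` mpp_rel p U xs Ys \<Phi>" by force
  qed
qed

section \<open>Closure properties of mpp-definable relations\<close>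

lemma mpp_definable_subset_tuples: "mpp_definable p U Rels n R \<Longrightarrow> R \<subseteq> tuples U n"
  by (auto simp: mpp_definable_def mpp_rel_def tuples_def)

lemma mpp_definable_regroup:
  assumes "mpp_definable p U Rels n R"
  shows "mpp_definable p U Rels n ((\<lambda>t. nths t I @ nths t ({..<n} - I)) ` R)"
proof -
  obtain xs Ys \<Phi> where wf: "mpp_wf Rels xs Ys \<Phi>" and len: "length xs = n"
    and R: "R = mpp_rel p U xs Ys \<Phi>"
    using assms unfolding mpp_definable_def by blast
  let ?xs' = "nths xs I @ nths xs ({..<n} - I)"
  have dist: "distinct xs" using wf by (simp add: mpp_wf_def)
  have "xs ! i \<noteq> xs ! j" if "i \<in> I" "j \<notin> I" "i < n" "j < n" for i j
    using that dist len nth_eq_iff_index_eq by fastforce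
  then have dist': "distinct ?xs'"
    using dist len by (auto simp: set_nths)
  have set': "set ?xs' = set xs"
    using len by (auto simp: set_nths in_set_conv_nth) blast
  have "length ?xs' = n"
    using distinct_card[OF dist'] distinct_card[OF dist] set' len by simp
  moreover have "mpp_wf Rels ?xs' Ys \<Phi>"
    using wf dist' set' by (simp add: mpp_wf_def)
  moreover have "map (assign xs t) ?xs' = nths t I @ nths t ({..<n} - I)" if "t \<in> R" for t
    using that dist len by (simp add: R mpp_rel_def nths_map[symmetric] map_assign)
  then have "mpp_rel p U ?xs' Ys \<Phi> = (\<lambda>t. nths t I @ nths t ({..<n} - I)) ` R"
    unfolding mpp_rel_rename[OF wf dist' set'] R[symmetric] by (rule image_cong[OF refl])
  ultimately show ?thesis unfolding mpp_definable_def by metis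
qed

lemma mpp_definable_duplicate:
  assumes "mpp_definable p U Rels n R" and i: "i < n"
  shows "mpp_definable p U Rels (Suc n) ((\<lambda>t. t @ [t ! i]) ` R)"
proof -
  obtain xs Ys \<Phi> where wf: "mpp_wf Rels xs Ys \<Phi>" and len: "length xs = n"
    and R: "R = mpp_rel p U xs Ys \<Phi>"
    using assms unfolding mpp_definable_def by blast
  have dist: "distinct xs" and fin: "finite (set xs \<union> \<Union>(set Ys))"
    using wf by (auto simp: mpp_wf_def)
  obtain z where z: "z \<notin> set xs \<union> \<Union>(set Ys)"
    using ex_new_if_finite[OF infinite_UNIV_nat fin] by blast
  let ?xs' = "xs @ [z]" and ?\<Phi>' = "EqAtom z (xs ! i) # \<Phi>"
  have xi: "xs ! i \<in> set xs" using i len by simp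
  have wf': "mpp_wf Rels ?xs' Ys ?\<Phi>'"
    using wf z xi by (auto simp: mpp_wf_def)
  have mem: "t @ [w] \<in> mpp_rel p U ?xs' Ys ?\<Phi>' \<longleftrightarrow> t \<in> R \<and> w = t ! i"
    if t: "length t = n" for t w
  proof -
    let ?\<sigma> = "assign ?xs' (t @ [w])"
    have agree: "\<forall>v\<in>set xs. ?\<sigma> v = assign xs t v"
      using t len by (simp add: assign_append)
    have \<sigma>z: "?\<sigma> z = w"
      using t len z by (simp add: assign_append) (simp add: assign_def)
    have "?\<sigma> (xs ! i) = t ! i"
      using agree xi map_assign[OF dist] t len i by (metis nth_map)
    moreover have "mpp_holds p U Ys ?\<Phi>' ?\<sigma> \<longleftrightarrow> ?\<sigma> z = ?\<sigma> (xs ! i) \<and> mpp_holds p U Ys \<Phi> ?\<sigma>"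
      using z wf xi by (subst mpp_holds_atom) (auto simp: mpp_wf_def)
    moreover have "t ! i \<in> set t" using t i by simp
    ultimately show ?thesis
      using mpp_holds_cong_free[OF wf agree] \<sigma>z t len by (auto simp: R mpp_rel_def)
  qed
  have "mpp_rel p U ?xs' Ys ?\<Phi>' = (\<lambda>t. t @ [t ! i]) ` R"
  proof (intro equalityI subsetI)
    fix a assume a: "a \<in> mpp_rel p U ?xs' Ys ?\<Phi>'"
    then have "length a = Suc n" using len by (simp add: mpp_rel_def)
    then obtain t w where "a = t @ [w]" "length t = n"
      by (cases a rule: rev_exhaust) auto
    then show "a \<in> (\<lambda>t. t @ [t ! i]) ` R" using a mem by blast
  next
    fix a assume "a \<in> (\<lambda>t. t @ [t ! i]) ` R"
    then obtain t where "t \<in> R" "a = t @ [t ! i]" by blast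
    moreover from \<open>t \<in> R\<close> have "length t = n" using len by (simp add: R mpp_rel_def)
    ultimately show "a \<in> mpp_rel p U ?xs' Ys ?\<Phi>'" using mem by blast
  qed
  moreover have "length ?xs' = Suc n" using len by simp
  ultimately show ?thesis using wf' unfolding mpp_definable_def by metis
qed

lemma mpp_definable_count_suffix:
  assumes "mpp_definable p U Rels n R" and m: "m \<le> n"
  shows "mpp_definable p U Rels m {x \<in> tuples U m. \<not> p dvd card {z \<in> tuples U (n - m). x @ z \<in> R}}"
proof -
  obtain xs Ys \<Phi> where wf: "mpp_wf Rels xs Ys \<Phi>" and len: "length xs = n"
    and R: "R = mpp_rel p U xs Ys \<Phi>"
    using assms unfolding mpp_definable_def by blast
  let ?xs1 = "take m xs" and ?xs2 = "drop m xs"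
  have dist: "distinct xs" using wf by (simp add: mpp_wf_def)
  then have disj: "set ?xs1 \<inter> set ?xs2 = {}"
    by (simp add: set_take_disj_set_drop_if_distinct)
  have wf': "mpp_wf Rels ?xs1 (set ?xs2 # Ys) \<Phi>"
  proof -
    have "set xs = set ?xs1 \<union> set ?xs2" by (metis append_take_drop_id set_append)
    then show ?thesis using wf disj by (auto simp: mpp_wf_def)
  qed
  have "x \<in> mpp_rel p U ?xs1 (set ?xs2 # Ys) \<Phi> \<longleftrightarrow>
          \<not> p dvd card {z \<in> tuples U (n - m). x @ z \<in> R}" if x: "x \<in> tuples U m" for x
  proof -
    have "x @ z \<in> R \<longleftrightarrow>
            mpp_holds p U Ys \<Phi> (override_on (assign ?xs1 x) (assign ?xs2 z) (set ?xs2))"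
      if "z \<in> tuples U (n - m)" for z
      using x that len m disj by (simp add: R mpp_rel_def tuples_def assign_append_disjoint[symmetric])
    then have "{z \<in> tuples U (n - m). x @ z \<in> R} = {z \<in> tuples U (length ?xs2).
                 mpp_holds p U Ys \<Phi> (override_on (assign ?xs1 x) (assign ?xs2 z) (set ?xs2))}"
      using len by auto
    then show ?thesis
      using x len m unfolding mpp_rel_def mpp_holds_Cons_tuples[OF distinct_drop[OF dist]]
      by (simp add: tuples_def)
  qed
  then have "mpp_rel p U ?xs1 (set ?xs2 # Ys) \<Phi> =
               {x \<in> tuples U m. \<not> p dvd card {z \<in> tuples U (n - m). x @ z \<in> R}}"
    using len m by (auto simp: mpp_rel_def tuples_def)
  moreover have "length ?xs1 = m" using len m by simp
  ultimately show ?thesis using wf' unfolding mpp_definable_def by metis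
qed

section \<open>Rectangular relations and rank-1 block matrices\<close>

lemma nths_cong: "(\<And>i. i < length xs \<Longrightarrow> i \<in> A \<longleftrightarrow> i \<in> B) \<Longrightarrow> nths xs A = nths xs B"
  unfolding nths_def by (auto intro!: arg_cong[where f = "map fst"] filter_cong simp: set_zip)

lemma rectangular_bin_Int_Times: "rectangular_bin B \<Longrightarrow> rectangular_bin (B \<inter> X \<times> Y)"
  unfolding rectangular_bin_def by blast

lemma rectangular_take_drop:
  assumes rect: "rectangular n R" and k: "0 < k" "k < n" and len: "\<forall>t\<in>R. length t = n"
  shows "rectangular_bin ((\<lambda>t. (take k t, drop k t)) ` R)"
proof -
  have "{..<k} \<noteq> {}" "{..<k} \<subset> {..<n}"
    using k by auto
  note split = rect[unfolded rectangular_def, rule_format, OF this]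
  have "nths t ({..<n} - {..<k}) = drop k t" if "t \<in> R" for t
    unfolding drop_eq_nths by (rule nths_cong) (use len that in auto)
  then have "{(nths t {..<k}, nths t ({..<n} - {..<k})) | t. t \<in> R} = (\<lambda>t. (take k t, drop k t)) ` R"
    by (auto simp only: nths_upt_eq_take)
  then show ?thesis using split by simp
qed

lemma rank1_block_cong:
  "(\<And>x y. x \<in> X \<Longrightarrow> y \<in> Y \<Longrightarrow> M x y mod int p = M' x y mod int p) \<Longrightarrow>
   rank1_block p X Y M = rank1_block p X Y M'"
  unfolding rank1_block_def by simp

lemma rank1_block_indicator:
  fixes X :: "'r set" and Y :: "'c set"
  assumes rect: "rectangular_bin {(x, y) \<in> X \<times> Y. P x y}" and fin: "finite Y"
  shows "rank1_block p X Y (\<lambda>x y. if P x y then 1 else 0)"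
proof -
  define row where "row x = {y \<in> Y. P x y}" for x
  have row_eq: "row x = row x'" if "P x y" "P x' y" "x \<in> X" "x' \<in> X" "y \<in> Y" for x x' y
    using that rect unfolding row_def rectangular_bin_def by blast
  obtain h :: "'c set \<Rightarrow> nat" where h: "inj_on h (Pow Y)"
    using finite_imp_inj_to_nat_seg[of "Pow Y"] fin by blast
  \<comment> \<open>Blocks are labelled by rows; label 0 is reserved for columns with no entry.\<close>
  define f where "f x = Suc (h (row x))" for x
  define x0 where "x0 y = (SOME x. x \<in> X \<and> P x y)" for y
  define g where "g y = (if \<exists>x\<in>X. P x y then f (x0 y) else 0)" for y
  have x0: "x0 y \<in> X" "P (x0 y) y" if "\<exists>x\<in>X. P x y" for y
    using someI_ex[of "\<lambda>x. x \<in> X \<and> P x y"] that unfolding x0_def by blast+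
  have g: "g y = f x" if "x \<in> X" "y \<in> Y" "P x y" for x y
    using that x0 row_eq[of x y "x0 y"] unfolding g_def f_def by auto
  have block_P: "P x y" if "x \<in> X" "y \<in> Y" "f x = g y" for x y
  proof -
    have ex: "\<exists>x\<in>X. P x y" using that(3) by (auto simp: g_def f_def split: if_splits)
    then have "h (row x) = h (row (x0 y))" using that(3) by (simp add: g_def f_def)
    then have "row x = row (x0 y)" using h by (auto simp: row_def inj_on_eq_iff)
    then show ?thesis using x0[OF ex] that by (auto simp: row_def)
  qed
  have supp: "\<forall>x\<in>X. \<forall>y\<in>Y. (if P x y then 1 else 0) mod int p \<noteq> 0 \<longrightarrow> f x = g y"
    using g by fastforce
  have blocks: "\<forall>i. \<exists>(u :: 'r \<Rightarrow> int) (v :: 'c \<Rightarrow> int). \<forall>x\<in>X. \<forall>y\<in>Y.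
                  f x = i \<longrightarrow> g y = i \<longrightarrow> (if P x y then 1 else 0) mod int p = (u x * v y) mod int p"
  proof
    fix i
    show "\<exists>(u :: 'r \<Rightarrow> int) (v :: 'c \<Rightarrow> int). \<forall>x\<in>X. \<forall>y\<in>Y.
            f x = i \<longrightarrow> g y = i \<longrightarrow> (if P x y then 1 else 0) mod int p = (u x * v y) mod int p"
      by (rule exI[of _ "\<lambda>_. 1"], rule exI[of _ "\<lambda>_. 1"]) (simp add: block_P)
  qed
  show ?thesis
    unfolding rank1_block_def by (intro exI[of _ f] exI[of _ g] conjI supp blocks)
qed

lemma rectangular_bin_support:
  fixes X :: "'r set" and Y :: "'c set"
  assumes "prime p" "rank1_block p X Y M"
  shows "rectangular_bin {(x, y) \<in> X \<times> Y. M x y mod int p \<noteq> 0}"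
  unfolding rectangular_bin_def
proof (intro allI impI)
  fix a b c d
  assume "(a, c) \<in> {(x, y) \<in> X \<times> Y. M x y mod int p \<noteq> 0}"
    and "(a, d) \<in> {(x, y) \<in> X \<times> Y. M x y mod int p \<noteq> 0}"
    and "(b, c) \<in> {(x, y) \<in> X \<times> Y. M x y mod int p \<noteq> 0}"
  then have mem: "a \<in> X" "b \<in> X" "c \<in> Y" "d \<in> Y"
    and nz: "M a c mod int p \<noteq> 0" "M a d mod int p \<noteq> 0" "M b c mod int p \<noteq> 0"
    by auto
  obtain f :: "'r \<Rightarrow> nat" and g :: "'c \<Rightarrow> nat"
    where supp: "\<forall>x\<in>X. \<forall>y\<in>Y. M x y mod int p \<noteq> 0 \<longrightarrow> f x = g y"
      and blocks: "\<forall>i. \<exists>u v. \<forall>x\<in>X. \<forall>y\<in>Y. f x = i \<longrightarrow> g y = i \<longrightarrow>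
                     M x y mod int p = (u x * v y) mod int p"
    using assms(2) unfolding rank1_block_def by blast
  obtain u :: "'r \<Rightarrow> int" and v :: "'c \<Rightarrow> int"
    where uv: "\<forall>x\<in>X. \<forall>y\<in>Y. f x = f a \<longrightarrow> g y = f a \<longrightarrow> M x y mod int p = (u x * v y) mod int p"
    using blocks by blast
  have same: "f b = f a" "g c = f a" "g d = f a"
    using supp mem nz by metis+
  have entry: "M x y mod int p = (u x * v y) mod int p" if "x \<in> {a, b}" "y \<in> {c, d}" for x y
    using uv mem same that by auto
  have "\<not> int p dvd u a * v c" "\<not> int p dvd u a * v d" "\<not> int p dvd u b * v c"
    using nz entry by (auto simp: dvd_eq_mod_eq_0)
  then have "\<not> int p dvd u b * v d"
    using \<open>prime p\<close> by (simp add: prime_dvd_mult_iff)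
  then show "(b, d) \<in> {(x, y) \<in> X \<times> Y. M x y mod int p \<noteq> 0}"
    using entry mem by (auto simp: dvd_eq_mod_eq_0)
qed

section \<open>Strong rectangularity versus strong balancedness\<close>

lemma finite_tuples: "finite U \<Longrightarrow> finite (tuples U k)"
  using finite_lists_length_eq[of U k] by (simp add: tuples_def conj_commute)

lemma card_duplicate_extensions:
  assumes R: "R \<subseteq> tuples U n" and i: "i < n" and s: "s \<in> tuples U n"
  shows "card {w \<in> tuples U 1. s @ w \<in> (\<lambda>t. t @ [t ! i]) ` R} = (if s \<in> R then 1 else 0)"
proof -
  have ext: "s @ w \<in> (\<lambda>t. t @ [t ! i]) ` R \<longleftrightarrow> s \<in> R \<and> w = [s ! i]" for w
  proof
    assume "s @ w \<in> (\<lambda>t. t @ [t ! i]) ` R"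
    then obtain t where t: "t \<in> R" "s @ w = t @ [t ! i]" by blast
    moreover have "length t = length s" using t(1) R s by (auto simp: tuples_def)
    ultimately show "s \<in> R \<and> w = [s ! i]" by simp
  qed blast
  have "s ! i \<in> U" using s i by (auto simp: tuples_def)
  then have "{w \<in> tuples U 1. s @ w \<in> (\<lambda>t. t @ [t ! i]) ` R} = (if s \<in> R then {[s ! i]} else {})"
    unfolding ext by (auto simp: tuples_def)
  then show ?thesis by simp
qed

lemma nths_partition_pairs:
  assumes R: "R \<subseteq> tuples U n" and I: "I \<subseteq> {..<n}"
  shows "{(nths t I, nths t ({..<n} - I)) | t. t \<in> R} =
         {(u, v) \<in> tuples U (card I) \<times> tuples U (n - card I).
            u @ v \<in> (\<lambda>t. nths t I @ nths t ({..<n} - I)) ` R}"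
proof -
  have tup: "nths t I \<in> tuples U (card I)" "nths t ({..<n} - I) \<in> tuples U (n - card I)"
    if t: "t \<in> R" for t
  proof -
    have len: "length t = n" and tU: "set t \<subseteq> U"
      using t R by (auto simp: tuples_def)
    have "{i. i < n \<and> i \<in> I} = I" "{i. i < n \<and> i \<in> {..<n} - I} = {..<n} - I"
      using I by auto
    moreover have "card ({..<n} - I) = n - card I"
      using I by (simp add: card_Diff_subset finite_subset)
    moreover have "set (nths t A) \<subseteq> U" for A
      using set_nths_subset[of t A] tU by (rule subset_trans)
    ultimately show "nths t I \<in> tuples U (card I)" "nths t ({..<n} - I) \<in> tuples U (n - card I)"
      unfolding tuples_def using len by (simp_all only: length_nths mem_Collect_eq)
  qed
  show ?thesis
  proof (intro equalityI subsetI)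
    fix uv assume "uv \<in> {(nths t I, nths t ({..<n} - I)) | t. t \<in> R}"
    then show "uv \<in> {(u, v) \<in> tuples U (card I) \<times> tuples U (n - card I).
                 u @ v \<in> (\<lambda>t. nths t I @ nths t ({..<n} - I)) ` R}"
      using tup by blast
  next
    fix uv assume "uv \<in> {(u, v) \<in> tuples U (card I) \<times> tuples U (n - card I).
                 u @ v \<in> (\<lambda>t. nths t I @ nths t ({..<n} - I)) ` R}"
    then obtain u v t where uv: "uv = (u, v)" "u \<in> tuples U (card I)" "t \<in> R"
      "u @ v = nths t I @ nths t ({..<n} - I)"
      by blast
    then have "u = nths t I \<and> v = nths t ({..<n} - I)"
      using tup(1)[OF uv(3)] by (simp add: tuples_def append_eq_append_conv)
    then show "uv \<in> {(nths t I, nths t ({..<n} - I)) | t. t \<in> R}"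
      using uv by blast
  qed
qed

lemma rank1_block_append_indicator:
  assumes fin: "finite U" and rect: "rectangular (k + l) S" and S: "S \<subseteq> tuples U (k + l)"
    and kl: "0 < k" "0 < l"
  shows "rank1_block p (tuples U k) (tuples U l) (\<lambda>x y. if x @ y \<in> S then 1 else 0)"
proof -
  have "\<forall>t\<in>S. length t = k + l"
    using S by (auto simp: tuples_def)
  then have "rectangular_bin ((\<lambda>t. (take k t, drop k t)) ` S \<inter> tuples U k \<times> tuples U l)"
    by (intro rectangular_bin_Int_Times rectangular_take_drop[OF rect]) (use kl in auto)
  moreover have "(\<lambda>t. (take k t, drop k t)) ` S \<inter> tuples U k \<times> tuples U l =
                   {(x, y) \<in> tuples U k \<times> tuples U l. x @ y \<in> S}"
    by (auto simp: tuples_def image_iff) (metis append_eq_conv_conj)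
  ultimately have "rectangular_bin {(x, y) \<in> tuples U k \<times> tuples U l. x @ y \<in> S}"
    by simp
  then show ?thesis
    by (rule rank1_block_indicator[OF _ finite_tuples[OF fin]])
qed

lemma strongly_rectangular_imp_strongly_balanced:
  assumes fin: "finite U" and SR: "strongly_rectangular 2 U Rels"
  shows "strongly_balanced 2 U Rels"
  unfolding strongly_balanced_def p_balanced_def
proof (intro allI impI)
  fix n R k l
  assume D: "mpp_definable 2 U Rels n R" and kl: "1 \<le> k" "1 \<le> l" "k + l < n"
  define S where "S = {x \<in> tuples U (k + l). \<not> 2 dvd card {z \<in> tuples U (n - (k + l)). x @ z \<in> R}}"
  have DS: "mpp_definable 2 U Rels (k + l) S"
    unfolding S_def using mpp_definable_count_suffix[OF D] kl by simp
  then have "rectangular (k + l) S"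
    using SR kl by (simp add: strongly_rectangular_def)
  then have "rank1_block 2 (tuples U k) (tuples U l) (\<lambda>x y. if x @ y \<in> S then 1 else 0)"
    using rank1_block_append_indicator[OF fin _ mpp_definable_subset_tuples[OF DS]] kl by simp
  moreover have entries: "(int (card {z \<in> tuples U (n - k - l). x @ y @ z \<in> R}) mod int 2) mod int 2 =
                   (if x @ y \<in> S then 1 else 0) mod int 2"
    if "x \<in> tuples U k" "y \<in> tuples U l" for x y
    using that by (auto simp: S_def tuples_def diff_diff_left odd_iff_mod_2_eq_one[symmetric])
  ultimately show "rank1_block 2 (tuples U k) (tuples U l)
                     (\<lambda>x y. int (card {z \<in> tuples U (n - k - l). x @ y @ z \<in> R}) mod int 2)"
    by (simp only: rank1_block_cong[OF entries])
qed

lemma p_balanced_duplicate_imp_rectangular_bin: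
  assumes p: "prime p" and bal: "p_balanced p U (Suc n) ((\<lambda>s. s @ [s ! 0]) ` R)"
    and R: "R \<subseteq> tuples U n" and k: "0 < k" "k < n"
  shows "rectangular_bin {(u, v) \<in> tuples U k \<times> tuples U (n - k). u @ v \<in> R}"
proof -
  let ?M = "\<lambda>u v. int (card {w \<in> tuples U 1. u @ v @ w \<in> (\<lambda>s. s @ [s ! 0]) ` R}) mod int p"
  have "Suc n - k - (n - k) = 1" using k by simp
  then have "rank1_block p (tuples U k) (tuples U (n - k)) ?M"
    using bal[unfolded p_balanced_def, rule_format, of k "n - k"] k by simp
  then have "rectangular_bin {(u, v) \<in> tuples U k \<times> tuples U (n - k). ?M u v mod int p \<noteq> 0}"
    by (rule rectangular_bin_support[OF p])
  moreover have "?M u v mod int p \<noteq> 0 \<longleftrightarrow> u @ v \<in> R"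
    if "u \<in> tuples U k" "v \<in> tuples U (n - k)" for u v
  proof -
    have "u @ v \<in> tuples U n" using that k by (auto simp: tuples_def)
    then show ?thesis
      using card_duplicate_extensions[OF R _ \<open>u @ v \<in> tuples U n\<close>, of 0] k
        prime_gt_1_nat[OF p] by (simp add: zmod_trivial_iff)
  qed
  ultimately show ?thesis
    by (simp cong: conj_cong)
qed

lemma strongly_balanced_imp_strongly_rectangular:
  assumes p: "prime p" and SB: "strongly_balanced p U Rels"
  shows "strongly_rectangular p U Rels"
  unfolding strongly_rectangular_def rectangular_def
proof (intro allI impI)
  fix n R I
  assume D: "mpp_definable p U Rels n R" and "2 \<le> n" and I: "I \<noteq> {}" "I \<subset> {..<n}"
  define R1 where "R1 = (\<lambda>t. nths t I @ nths t ({..<n} - I)) ` R"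
  have D1: "mpp_definable p U Rels n R1"
    unfolding R1_def by (rule mpp_definable_regroup[OF D])
  have "mpp_definable p U Rels (Suc n) ((\<lambda>s. s @ [s ! 0]) ` R1)"
    using mpp_definable_duplicate[OF D1, of 0] \<open>2 \<le> n\<close> by simp
  then have "p_balanced p U (Suc n) ((\<lambda>s. s @ [s ! 0]) ` R1)"
    using SB by (simp add: strongly_balanced_def)
  moreover have "0 < card I" "card I < n"
    using I finite_subset[of I "{..<n}"] psubset_card_mono[of "{..<n}" I]
    by (auto simp: card_gt_0_iff)
  ultimately have "rectangular_bin {(u, v) \<in> tuples U (card I) \<times> tuples U (n - card I). u @ v \<in> R1}"
    using p_balanced_duplicate_imp_rectangular_bin[OF p _ mpp_definable_subset_tuples[OF D1]] by simp
  then show "rectangular_bin {(nths t I, nths t ({..<n} - I)) | t. t \<in> R}"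
    using nths_partition_pairs[OF mpp_definable_subset_tuples[OF D]] I
    unfolding R1_def by auto
qed

theorem lemma6p3:
  fixes U :: "'a set" and Rels :: "(nat \<times> 'a list set) set"
  assumes "finite U" and "U \<noteq> {}" and "finite Rels"
    and "\<forall>(n, R)\<in>Rels. R \<subseteq> tuples U n"
  shows "strongly_rectangular 2 U Rels \<longleftrightarrow> strongly_balanced 2 U Rels"
  using strongly_rectangular_imp_strongly_balanced[OF assms(1)]
    strongly_balanced_imp_strongly_rectangular[OF two_is_prime_nat]
  by blast

end
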